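(* Let $e,e',\hat e$ be events of a branching process of a parallel composition $\mathbf{A}=\mathcal{A}_1\parallel\cdots\parallel\mathcal{A}_n$ of labelled transition systems. If $e'\ll e$ and $\hat e$ is concurrent with both $e'$ and $e$, then $([e]\setminus[e'])\cap[\hat e]=\emptyset$.
   Context: A labelled transition system is $\mathcal{A}=(\Sigma,S,T,\lambda,s^0)$ with $T\subseteq S\times S$, $\lambda:T\to\Sigma$. For $\mathcal{A}_j=(\Sigma_j,S_j,T_j,\lambda_j,s^0_j)$, the parallel composition has global states in $S_1\times\cdots\times S_n$, initial state $(s^0_1,\dots,s^0_n)$, and global transitions $\mathbf{t}=(t_1,\dots,t_n)\ne(\star,\dots,\star)$ with label $a$, where $t_j$ is an $a$-transition of $\mathcal{A}_j$ if $a\in\Sigma_j$ and $t_j=\star$ otherwise; ${}^\bullet\mathbf{t}$ / $\mathbf{t}^\bullet$ are the source / target states of the $t_j\ne\star$. Branching processes of $\mathbf{A}$ are Petri nets with conditions labelled by local states and events labelled by global transitions, defined inductively: the net with conditions $b^0_1,\dots,b^0_n$ labelled $s^0_1,\dots,s^0_n$ and no events is one; if a reachable marking contains a set $M$ of conditions labelled exactly by ${}^\bullet\mathbf{t}$ and no event labelled $\mathbf{t}$ has input set $M$, adding an event labelled $\mathbf{t}$ with inputs $M$ and fresh outputs labelled by the states of $\mathbf{t}^\bullet$ gives a branching process; general branching processes are unions of such. For nodes $x,y$: $x<y$ if there is a nonempty directed arc path from $x$ to $y$; $x$ and $y$ are in conflict if there is a condition $z$ different from both from which both are reachable via paths leaving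 $z$ by different arcs; $x,y$ are concurrent if neither $x\le y$, nor $y\le x$, nor in conflict. $[e]=\{e':e'\le e\}$; $M(e)$ is the marking reached by firing exactly the events of $[e]$ from the initial marking. $e'\ll e$ (strong cause) means $e'<e$ and $b'<b$ for all $b\in M(e)\setminus M(e')$, $b'\in M(e')\setminus M(e)$. *)

theory Defs
  imports Main "HOL-Library.FSet"
begin

record ('a, 's) lts =
  alph  :: "'a set"
  states :: "'s set"
  trans :: "('s \<times> 's) set"
  lab   :: "'s \<times> 's \<Rightarrow> 'a"
  init  :: "'s"

definition wf_lts :: "('a, 's) lts \<Rightarrow> bool" where
  "wf_lts L \<longleftrightarrow> trans L \<subseteq> states L \<times> states L \<and> init L \<in> states L
      \<and> (\<forall>t \<in> trans L. lab L t \<in> alph L)"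

text \<open>A global transition of A_0 || ... || A_(n-1) is represented as a function
  from component indices to optional local transitions (None = star).\<close>
type_synonym 's gtrans = "nat \<Rightarrow> ('s \<times> 's) option"

definition is_gtrans :: "(nat \<Rightarrow> ('a, 's) lts) \<Rightarrow> nat \<Rightarrow> 's gtrans \<Rightarrow> 'a \<Rightarrow> bool" where
  "is_gtrans A n t a \<longleftrightarrow>
     (\<forall>j. n \<le> j \<longrightarrow> t j = None) \<and> (\<exists>j<n. t j \<noteq> None) \<and>
     (\<forall>j<n. (a \<in> alph (A j) \<longrightarrow> (\<exists>tr. t j = Some tr \<and> tr \<in> trans (A j) \<and> lab (A j) tr = a))
           \<and> (a \<notin> alph (A j) \<longrightarrow> t j = None))"

definition gtrans_set :: "(nat \<Rightarrow> ('a, 's) lts) \<Rightarrow> nat \<Rightarrow> 's gtrans set" where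
  "gtrans_set A n = {t. \<exists>a. is_gtrans A n t a}"

definition gpre :: "nat \<Rightarrow> 's gtrans \<Rightarrow> (nat \<times> 's) set" where
  "gpre n t = {(j, fst tr) | j tr. j < n \<and> t j = Some tr}"

text \<open>A condition is named by its label (component index, local state) and its
  unique input event (None for initial conditions); an event is named by its
  label (a global transition) and its set of input conditions.\<close>
datatype 's cnd = Cnd (cnd_comp: nat) (cnd_state: 's) (cnd_pre: "'s evt option")
     and 's evt = Evt (evt_lab: "'s gtrans") (evt_pre: "'s cnd fset")

datatype 's node = NC "'s cnd" | NE "'s evt"

definition clab :: "'s cnd \<Rightarrow> nat \<times> 's" where
  "clab b = (cnd_comp b, cnd_state b)"

definition init_conds :: "(nat \<Rightarrow> ('a, 's) lts) \<Rightarrow> nat \<Rightarrow> 's cnd set" where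
  "init_conds A n = {Cnd j (init (A j)) None | j. j < n}"

definition inputs :: "'s evt \<Rightarrow> 's cnd set" where
  "inputs e = fset (evt_pre e)"

definition outputs :: "nat \<Rightarrow> 's evt \<Rightarrow> 's cnd set" where
  "outputs n e = {Cnd j (snd tr) (Some e) | j tr. j < n \<and> evt_lab e j = Some tr}"

inductive_set reach_marks :: "(nat \<Rightarrow> ('a, 's) lts) \<Rightarrow> nat \<Rightarrow> 's evt set \<Rightarrow> 's cnd set set"
  for A n E where
  init_mark: "init_conds A n \<in> reach_marks A n E"
| fire: "Mk \<in> reach_marks A n E \<Longrightarrow> e \<in> E \<Longrightarrow> inputs e \<subseteq> Mk \<Longrightarrow>
         (Mk - inputs e) \<union> outputs n e \<in> reach_marks A n E"

inductive_set fin_bp :: "(nat \<Rightarrow> ('a, 's) lts) \<Rightarrow> nat \<Rightarrow> 's evt set set"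
  for A n where
  empty: "{} \<in> fin_bp A n"
| extend: "E \<in> fin_bp A n \<Longrightarrow> Mk \<in> reach_marks A n E \<Longrightarrow> fset M \<subseteq> Mk \<Longrightarrow>
           t \<in> gtrans_set A n \<Longrightarrow> inj_on clab (fset M) \<Longrightarrow> clab ` fset M = gpre n t \<Longrightarrow>
           Evt t M \<notin> E \<Longrightarrow> insert (Evt t M) E \<in> fin_bp A n"

definition branching_process :: "(nat \<Rightarrow> ('a, 's) lts) \<Rightarrow> nat \<Rightarrow> 's evt set \<Rightarrow> bool" where
  "branching_process A n E \<longleftrightarrow> (\<exists>F. F \<subseteq> fin_bp A n \<and> E = \<Union>F)"

definition conds :: "(nat \<Rightarrow> ('a, 's) lts) \<Rightarrow> nat \<Rightarrow> 's evt set \<Rightarrow> 's cnd set" where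
  "conds A n E = init_conds A n \<union> (\<Union>e\<in>E. outputs n e)"

definition arcs :: "nat \<Rightarrow> 's evt set \<Rightarrow> ('s node \<times> 's node) set" where
  "arcs n E = {(NC b, NE e) | b e. e \<in> E \<and> b \<in> inputs e}
            \<union> {(NE e, NC b) | b e. e \<in> E \<and> b \<in> outputs n e}"

definition nlt :: "nat \<Rightarrow> 's evt set \<Rightarrow> 's node \<Rightarrow> 's node \<Rightarrow> bool" where
  "nlt n E x y \<longleftrightarrow> (x, y) \<in> (arcs n E)\<^sup>+"

definition nle :: "nat \<Rightarrow> 's evt set \<Rightarrow> 's node \<Rightarrow> 's node \<Rightarrow> bool" where
  "nle n E x y \<longleftrightarrow> (x, y) \<in> (arcs n E)\<^sup>*"

definition conflict :: "(nat \<Rightarrow> ('a, 's) lts) \<Rightarrow> nat \<Rightarrow> 's evt set \<Rightarrow> 's node \<Rightarrow> 's node \<Rightarrow> bool" where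
  "conflict A n E x y \<longleftrightarrow>
     (\<exists>z \<in> conds A n E. NC z \<noteq> x \<and> NC z \<noteq> y \<and>
        (\<exists>e1 e2. e1 \<noteq> e2 \<and> (NC z, NE e1) \<in> arcs n E \<and> (NC z, NE e2) \<in> arcs n E \<and>
                 nle n E (NE e1) x \<and> nle n E (NE e2) y))"

definition concurrent :: "(nat \<Rightarrow> ('a, 's) lts) \<Rightarrow> nat \<Rightarrow> 's evt set \<Rightarrow> 's node \<Rightarrow> 's node \<Rightarrow> bool" where
  "concurrent A n E x y \<longleftrightarrow> \<not> nle n E x y \<and> \<not> nle n E y x \<and> \<not> conflict A n E x y"

definition lconf :: "nat \<Rightarrow> 's evt set \<Rightarrow> 's evt \<Rightarrow> 's evt set" where
  "lconf n E e = {e' \<in> E. nle n E (NE e') (NE e)}"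

text \<open>M(e): marking reached by firing exactly the events of [e] from the initial marking
  (standard formula (Min(N) \<union> [e]\<bullet>) - \<bullet>[e]).\<close>
definition mark :: "(nat \<Rightarrow> ('a, 's) lts) \<Rightarrow> nat \<Rightarrow> 's evt set \<Rightarrow> 's evt \<Rightarrow> 's cnd set" where
  "mark A n E e = (init_conds A n \<union> (\<Union>f\<in>lconf n E e. outputs n f))
                   - (\<Union>f\<in>lconf n E e. inputs f)"

definition strong_cause :: "(nat \<Rightarrow> ('a, 's) lts) \<Rightarrow> nat \<Rightarrow> 's evt set \<Rightarrow> 's evt \<Rightarrow> 's evt \<Rightarrow> bool" where
  "strong_cause A n E e' e \<longleftrightarrow> nlt n E (NE e') (NE e) \<and>
     (\<forall>b \<in> mark A n E e - mark A n E e'. \<forall>b' \<in> mark A n E e' - mark A n E e.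
        nlt n E (NC b') (NC b))"

end

theory Submission
  imports Defs
begin

text \<open>Write eh for the event concurrent with e and e'. Suppose some f in [e] - [e'] lies below
  eh. Along a causal chain from f up to eh there is a last event x in [e]; it hands a condition d
  to an event y outside [e] with y \<le> eh. No event of [e] consumes d, since that event would be
  in conflict with y and hence eh in conflict with e. So d lies in M(e), but not in M(e') as x is
  not in [e']. On the other hand e' < e provides an output c of e' in M(e') - M(e). Strong
  causality gives c < d, whence e' < c < d < y \<le> eh, contradicting the concurrency of e' and eh.\<close>

lemma rtrancl_exit_edge:
  assumes "(a, b) \<in> r\<^sup>*" "a \<in> S" "b \<notin> S"
  obtains x y where "(a, x) \<in> r\<^sup>*" "x \<in> S" "y \<notin> S" "(x, y) \<in> r" "(y, b) \<in> r\<^sup>*"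
  using assms
proof (induction arbitrary: thesis rule: converse_rtrancl_induct)
  case base
  then show ?case by simp
next
  case (step a z)
  show ?case
  proof (cases "z \<in> S")
    case True
    with step.IH step.prems(3) obtain x y
      where "(z, x) \<in> r\<^sup>*" "x \<in> S" "y \<notin> S" "(x, y) \<in> r" "(y, b) \<in> r\<^sup>*"
      by blast
    with step.hyps(1) show ?thesis
      by (intro step.prems(1)) (auto intro: converse_rtrancl_into_rtrancl)
  next
    case False
    then show ?thesis using step by blast
  qed
qed

text \<open>Nodes are named by their history, so every arc strictly increases the datatype size.\<close>

fun node_size :: "'s node \<Rightarrow> nat" where
  "node_size (NC b) = size b"
| "node_size (NE e) = size e"

lemma size_cnd_less_size_evt: "b |\<in>| M \<Longrightarrow> size b < size (Evt t M)"
proof -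
  assume "b |\<in>| M"
  then have "Suc (size b) \<le> (\<Sum>x\<in>fset M. Suc (size x))"
    by (intro member_le_sum) auto
  then show ?thesis by simp
qed

lemma arc_increases_node_size: "(x, y) \<in> arcs n E \<Longrightarrow> node_size x < node_size y"
proof -
  assume "(x, y) \<in> arcs n E"
  then consider (consumed) b e where "x = NC b" "y = NE e" "b \<in> inputs e"
    | (produced) b e where "x = NE e" "y = NC b" "b \<in> outputs n e"
    unfolding arcs_def by blast
  then show ?thesis
  proof cases
    case consumed
    then show ?thesis
      using size_cnd_less_size_evt[of b "evt_pre e" "evt_lab e"]
      by (cases e) (auto simp: inputs_def)
  next
    case produced
    then show ?thesis by (auto simp: outputs_def)
  qed
qed

lemma acyclic_arcs: "acyclic (arcs n E)"
proof -
  have "node_size x < node_size y" if "(x, y) \<in> (arcs n E)\<^sup>+" for x y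
    using that by (induction rule: trancl_induct) (auto dest: arc_increases_node_size)
  then show ?thesis unfolding acyclic_def by blast
qed

definition evt_succ :: "nat \<Rightarrow> 's evt set \<Rightarrow> ('s evt \<times> 's evt) set" where
  "evt_succ n E = {(g, h). g \<in> E \<and> h \<in> E \<and> (\<exists>d. d \<in> outputs n g \<and> d \<in> inputs h)}"

lemma arcs_rtrancl_from_event:
  assumes "(NE g, y) \<in> (arcs n E)\<^sup>*"
  shows "(\<forall>h. y = NE h \<longrightarrow> (g, h) \<in> (evt_succ n E)\<^sup>*) \<and>
         (\<forall>c. y = NC c \<longrightarrow> (\<exists>g'. (g, g') \<in> (evt_succ n E)\<^sup>* \<and> g' \<in> E \<and> c \<in> outputs n g'))"
  using assms
proof (induction rule: rtrancl_induct)
  case base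
  then show ?case by simp
next
  case (step y z)
  from step.hyps(2) consider (consumed) b h where "y = NC b" "z = NE h" "b \<in> inputs h" "h \<in> E"
    | (produced) b h where "y = NE h" "z = NC b" "b \<in> outputs n h" "h \<in> E"
    unfolding arcs_def by blast
  then show ?case
  proof cases
    case consumed
    with step.IH obtain g' where "(g, g') \<in> (evt_succ n E)\<^sup>*" "g' \<in> E" "b \<in> outputs n g'"
      by auto
    moreover from this consumed have "(g', h) \<in> evt_succ n E"
      unfolding evt_succ_def by blast
    ultimately show ?thesis using consumed by simp
  next
    case produced
    then show ?thesis using step.IH by auto
  qed
qed

lemma nle_events_iff_evt_succ:
  "nle n E (NE g) (NE h) \<longleftrightarrow> (g, h) \<in> (evt_succ n E)\<^sup>*"
proof
  show "nle n E (NE g) (NE h) \<Longrightarrow> (g, h) \<in> (evt_succ n E)\<^sup>*"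
    using arcs_rtrancl_from_event[where y="NE h"] unfolding nle_def by simp
next
  show "(g, h) \<in> (evt_succ n E)\<^sup>* \<Longrightarrow> nle n E (NE g) (NE h)"
    unfolding nle_def
  proof (induction rule: rtrancl_induct)
    case base
    then show ?case by simp
  next
    case (step y z)
    then obtain d where "y \<in> E" "z \<in> E" "d \<in> outputs n y" "d \<in> inputs z"
      unfolding evt_succ_def by auto
    then have "(NE y, NC d) \<in> arcs n E" "(NC d, NE z) \<in> arcs n E"
      unfolding arcs_def by auto
    with step.IH show ?case by (meson rtrancl.rtrancl_into_rtrancl)
  qed
qed

lemma output_in_mark_imp_lconf:
  assumes "d \<in> outputs n x" "d \<in> mark A n E e"
  shows "x \<in> lconf n E e"
proof -
  have pre: "cnd_pre d = Some x" using assms(1) unfolding outputs_def by auto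
  then have "d \<notin> init_conds A n" unfolding init_conds_def by auto
  with assms(2) obtain g where "g \<in> lconf n E e" "d \<in> outputs n g"
    unfolding mark_def by auto
  with pre show ?thesis unfolding outputs_def by auto
qed

lemma strict_cause_output_in_mark:
  assumes "e' \<in> E" "nlt n E (NE e') (NE e)"
  obtains c where "c \<in> outputs n e'" "c \<in> mark A n E e'" "c \<notin> mark A n E e"
proof -
  from assms(2) obtain u where "(NE e', u) \<in> arcs n E" "(u, NE e) \<in> (arcs n E)\<^sup>*"
    unfolding nlt_def by (blast dest: tranclD)
  then obtain c where arc_out: "(NE e', NC c) \<in> arcs n E" and "(NC c, NE e) \<in> (arcs n E)\<^sup>+"
    unfolding arcs_def by (auto dest: rtranclD)
  then obtain g where arc_in: "(NC c, NE g) \<in> arcs n E" and g_e: "(NE g, NE e) \<in> (arcs n E)\<^sup>*"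
    unfolding arcs_def by (blast dest: tranclD)
  from arc_out arc_in g_e have c: "c \<in> outputs n e'" "c \<in> inputs g" "g \<in> lconf n E e"
    unfolding arcs_def lconf_def nle_def by auto
  then have "c \<notin> mark A n E e" unfolding mark_def by auto
  moreover have "c \<notin> inputs h" if h: "h \<in> lconf n E e'" for h
  proof
    assume "c \<in> inputs h"
    with h have "(NC c, NE h) \<in> arcs n E" "(NE h, NE e') \<in> (arcs n E)\<^sup>*"
      unfolding arcs_def lconf_def nle_def by auto
    with arc_out have "(NE e', NE e') \<in> (arcs n E)\<^sup>+" by auto
    with acyclic_arcs show False unfolding acyclic_def by blast
  qed
  moreover have "e' \<in> lconf n E e'" using assms(1) unfolding lconf_def nle_def by auto
  ultimately show thesis using that c(1) unfolding mark_def by blast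
qed

lemma frontier_output_in_mark:
  assumes "x \<in> lconf n E e" "d \<in> outputs n x" "d \<in> inputs y" "y \<in> E" "y \<notin> lconf n E e"
    and "nle n E (NE y) (NE g)" "\<not> conflict A n E (NE g) (NE e)"
  shows "d \<in> mark A n E e"
proof -
  have "d \<notin> inputs h" if h: "h \<in> lconf n E e" for h
  proof
    assume "d \<in> inputs h"
    then have "(NC d, NE h) \<in> arcs n E" using h unfolding arcs_def lconf_def by auto
    moreover have "(NC d, NE y) \<in> arcs n E" using assms(3,4) unfolding arcs_def by auto
    moreover have "d \<in> conds A n E" using assms(1,2) unfolding conds_def lconf_def by auto
    moreover have "y \<noteq> h" "nle n E (NE h) (NE e)" using assms(5) h unfolding lconf_def by auto
    ultimately have "conflict A n E (NE g) (NE e)"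
      using assms(6) unfolding conflict_def by blast
    with assms(7) show False by simp
  qed
  with assms(1,2) show ?thesis unfolding mark_def by auto
qed

lemma frontier_condition_in_mark_diff:
  assumes "f \<in> lconf n E e" "f \<notin> lconf n E e'" "nle n E (NE f) (NE g)"
    and "\<not> nle n E (NE g) (NE e)" "\<not> conflict A n E (NE g) (NE e)"
  obtains d y where "d \<in> mark A n E e - mark A n E e'" "(NC d, NE y) \<in> arcs n E"
    "nle n E (NE y) (NE g)"
proof -
  have "g \<notin> lconf n E e" using assms(4) unfolding lconf_def by auto
  with assms(1,3) obtain x y where f_x: "(f, x) \<in> (evt_succ n E)\<^sup>*" and x: "x \<in> lconf n E e"
    and y: "y \<notin> lconf n E e" "(x, y) \<in> evt_succ n E" "nle n E (NE y) (NE g)"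
    unfolding nle_events_iff_evt_succ by (blast elim: rtrancl_exit_edge)
  then obtain d where d: "d \<in> outputs n x" "d \<in> inputs y" "y \<in> E"
    unfolding evt_succ_def by auto
  have "x \<notin> lconf n E e'"
    using assms(1,2) f_x unfolding lconf_def nle_events_iff_evt_succ by (auto dest: rtrancl_trans)
  with d have "d \<notin> mark A n E e'" by (auto dest: output_in_mark_imp_lconf)
  moreover have "d \<in> mark A n E e" by (rule frontier_output_in_mark[OF x d y(1,3) assms(5)])
  moreover have "(NC d, NE y) \<in> arcs n E" using d unfolding arcs_def by blast
  ultimately show thesis using that y(3) by blast
qed

theorem lemma2:
  fixes A :: "nat \<Rightarrow> ('a, 's) lts" and n :: nat and E :: "'s evt set"
    and e e' eh :: "'s evt"
  assumes "\<forall>j<n. wf_lts (A j)"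
    and "branching_process A n E"
    and "e \<in> E" and "e' \<in> E" and "eh \<in> E"
    and "strong_cause A n E e' e"
    and "concurrent A n E (NE eh) (NE e')"
    and "concurrent A n E (NE eh) (NE e)"
  shows "(lconf n E e - lconf n E e') \<inter> lconf n E eh = {}"
proof (rule ccontr)
  assume "(lconf n E e - lconf n E e') \<inter> lconf n E eh \<noteq> {}"
  then obtain f where "f \<in> lconf n E e" "f \<notin> lconf n E e'" "nle n E (NE f) (NE eh)"
    unfolding lconf_def by blast
  then obtain d y where d: "d \<in> mark A n E e - mark A n E e'" "(NC d, NE y) \<in> arcs n E"
    and y_eh: "nle n E (NE y) (NE eh)"
    using assms(8) unfolding concurrent_def by (blast elim: frontier_condition_in_mark_diff)
  from assms(6) have "nlt n E (NE e') (NE e)" by (simp add: strong_cause_def)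
  then obtain c where c: "c \<in> outputs n e'" "c \<in> mark A n E e' - mark A n E e"
    by (rule strict_cause_output_in_mark[OF assms(4)]) blast
  with d(1) assms(6) have "(NC c, NC d) \<in> (arcs n E)\<^sup>*"
    unfolding strong_cause_def nlt_def by (blast dest: trancl_into_rtrancl)
  moreover have "(NE e', NC c) \<in> arcs n E" using c(1) assms(4) unfolding arcs_def by blast
  ultimately have "(NE e', NE y) \<in> (arcs n E)\<^sup>*"
    using d(2) by (meson converse_rtrancl_into_rtrancl rtrancl.rtrancl_into_rtrancl)
  then have "nle n E (NE e') (NE eh)"
    using y_eh unfolding nle_def by (rule rtrancl_trans)
  with assms(7) show False unfolding concurrent_def by simp
qed

end
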